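(* Let $(g_0,\mathbf e)$ be a generalized $\mathcal{G}$-coding with terminal vertex sequence $(z_k)$ (with $z_0=\iota(e_1)$) and associated quasi-geodesic sequence $(g_k)_{k\ge0}$. Then for every $k$ (with $k+1$ in the index set), $g_{k+1}W(z_{k+1})\subsetneq g_kW(z_k)$. Moreover, no element of $\Gamma$ appears in the sequence $(g_k)$ more than $\#Z$ times.
   Context: Setup. $\Gamma$ is a finitely generated group hyperbolic relative to a finite nonempty collection $\mathcal{P}$ of infinite subgroups, with $(\Gamma,\mathcal{P})$ non-elementary, and $\mathcal{S}$ a finite symmetric generating set with $P\cap\mathcal{S}$ generating $P$ for each $P\in\mathcal{P}$. $X$ is the Groves–Manning cusped space (the Cayley graph with combinatorial horoballs glued along the cosets $gP$), a locally finite graph with unit edges, metric $d_X$, $\delta$-hyperbolic for a fixed integer $\delta\ge1$; $|g|_X=d_X(\mathrm{id},g)$. Its Gromov boundary is the Bowditch boundary $\partial(\Gamma,\mathcal{P})$, with a fixed metric $d_\partial$ (balls $B_r$, neighborhoods $N_r$, closed neighborhoods $\overline N_r$, $\operatorname{diam}$ w.r.t. $d_\partial$). $\Pi$ is the finite set of points fixed by groups in $\mathcal{P}$, $\Gamma_p$ the group fixing $p\in\Pi$; translates $gp$ are parabolic points, and all other boundary points are conical limit points. $D>0$ is such that any distinct $x,y$ have some $g\in\Gamma$ with $d_\partial(gx,gy)>D$; for $p\in\Pi$, $K_p\subset\partial(\Gamma,\mathcal{P})\setminus\{p\}$ is compact with $\Gamma_pK_p=\partial(\Gamma,\mathcal{P})\setminus\{p\}$,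 and $D_\Pi>0$ satisfies $D_\Pi<\operatorname{diam}K_p$, $D_\Pi<d_\partial(K_p,p)$ for all $p$. Automaton. Fix $0<\varepsilon<\min(D/5,D_\Pi/5)$, a finite set $Z\subset\partial(\Gamma,\mathcal{P})$, and for each $z\in Z$ open sets $V(z),W(z),\hat V(z),\hat W(z)$ and a set $L(z)\subset\Gamma$ such that: if $z$ is conical, $L(z)=\{\alpha_z\}$, $\hat V(z)=\alpha_z^{-1}V(z)$, $\hat W(z)=\alpha_z^{-1}W(z)$; if $z=gp$ is parabolic ($p\in\Pi$), then $L(z)=g\Gamma_p\setminus F_z$ for a finite set $F_z$, $\hat V(z)\subset\hat W(z)\subset\partial(\Gamma,\mathcal{P})\setminus\{p\}$ and $p\notin\overline N_\varepsilon(\hat W(z))$; the sets $V(z)$, $z\in Z$, cover $\partial(\Gamma,\mathcal{P})$; and for all $z\in Z$: (C1) $\operatorname{diam}W(z)<\varepsilon$; (C2) $\operatorname{diam}\hat W(z)>4\varepsilon$; (C3) $\overline N_{2\varepsilon}(\hat V(z))\subset\hat W(z)$; (C4) $W(z)=\{z\}\cup\bigcup_{\alpha\in L(z)}\alpha\hat W(z)$; (C5) $V(z)=\{z\}\cup\bigcup_{\alpha\in L(z)}\alpha\hat V(z)$ and $\overline{V(z)}\subset W(z)$; (C6) for all $y,z\in Z$, $\overline{\hat V(z)}\cap\overline{V(y)}=\emptyset$ iff $\hat V(z)\cap V(y)=\emptyset$. The automaton $\mathcal{G}$ is the directed graph with vertex set $Z$ where, for $y,z\in Z$, there is no edge from $z$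 to $y$ if $\hat V(z)\cap V(y)=\emptyset$, and otherwise there is exactly one edge from $z$ to $y$ labeled $\alpha$ for each $\alpha\in L(z)$. For an edge $e$, $\iota(e),\tau(e),\mathrm{Lab}(e)$ denote its initial vertex, terminal vertex and label. Codings. A strict conical coding is an infinite edge path $\mathbf e=(e_k)_{k\ge1}$ in $\mathcal{G}$; writing $\alpha_k=\mathrm{Lab}(e_k)$, $z_k=\tau(e_k)$ ($k\ge1$), $z_0=\iota(e_1)$, it is a strict coding of $\zeta$ if $\zeta\in\bigcap_{k\ge0}\alpha_1\cdots\alpha_k\overline{W(z_k)}$. A strict parabolic coding is a finite edge path $e_1,\dots,e_n$ ($n\ge0$) whose final vertex $q$ is parabolic; it is a strict coding of $\zeta$ if $\zeta=\alpha_1\cdots\alpha_nq$. A generalized coding is a pair $(g_0,\mathbf e)$ with $g_0\in\Gamma$ and $\mathbf e$ a strict coding (conical or parabolic); if $\mathbf e$ codes $\xi$, then $(g_0,\mathbf e)$ codes $g_0\xi$. Its label/terminal vertex sequences are those of $\mathbf e$, and its associated quasi-geodesic sequence is $g_k:=g_0\alpha_1\cdots\alpha_k$, $k\ge0$. *)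

theory Defs
  imports "HOL-Analysis.Analysis" "HOL-Algebra.Group_Action"
begin

definition Ncl :: "real \<Rightarrow> 'b::metric_space set \<Rightarrow> 'b set" where
  "Ncl r A = {x. A \<noteq> {} \<and> infdist x A \<le> r}"

definition stab :: "('g, 'm) monoid_scheme \<Rightarrow> ('g \<Rightarrow> 'b \<Rightarrow> 'b) \<Rightarrow> 'b \<Rightarrow> 'g set" where
  "stab G phi p = {g \<in> carrier G. phi g p = p}"

text \<open>Parabolic points: translates of the points in PP. All other points are conical.\<close>
definition parabolic_pt :: "('g, 'm) monoid_scheme \<Rightarrow> ('g \<Rightarrow> 'b \<Rightarrow> 'b) \<Rightarrow> 'b set \<Rightarrow> 'b \<Rightarrow> bool" where
  "parabolic_pt G phi PP z \<longleftrightarrow> (\<exists>g\<in>carrier G. \<exists>p\<in>PP. z = phi g p)"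

text \<open>Standing hypotheses on the boundary action (abstracting the relatively hyperbolic setup):
  G acts on the compact metric space UNIV (the Bowditch boundary) by homeomorphisms,
  PP is the finite nonempty set of points fixed by the peripheral subgroups, with infinite stabilisers,
  and the constants D, K_p, D_Pi are as in the setup.\<close>
definition boundary_setup ::
  "('g, 'm) monoid_scheme \<Rightarrow> ('g \<Rightarrow> 'b::metric_space \<Rightarrow> 'b) \<Rightarrow> 'b set \<Rightarrow> real
     \<Rightarrow> ('b \<Rightarrow> 'b set) \<Rightarrow> real \<Rightarrow> bool" where
  "boundary_setup G phi PP D K DPi \<longleftrightarrow>
     group G \<and> group_action G UNIV phi \<and> compact (UNIV :: 'b set) \<and>
     (\<forall>g\<in>carrier G. continuous_on UNIV (phi g)) \<and>
     finite PP \<and> PP \<noteq> {} \<and> (\<forall>p\<in>PP. infinite (stab G phi p)) \<and>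
     D > 0 \<and> (\<forall>x y. x \<noteq> y \<longrightarrow> (\<exists>g\<in>carrier G. dist (phi g x) (phi g y) > D)) \<and>
     DPi > 0 \<and>
     (\<forall>p\<in>PP. compact (K p) \<and> p \<notin> K p \<and>
        (\<Union>g\<in>stab G phi p. phi g ` K p) = UNIV - {p} \<and>
        DPi < diameter (K p) \<and> DPi < infdist p (K p))"

definition automaton_data ::
  "('g, 'm) monoid_scheme \<Rightarrow> ('g \<Rightarrow> 'b::metric_space \<Rightarrow> 'b) \<Rightarrow> 'b set \<Rightarrow> real \<Rightarrow> real \<Rightarrow> real
     \<Rightarrow> 'b set \<Rightarrow> ('b \<Rightarrow> 'g set) \<Rightarrow> ('b \<Rightarrow> 'b set) \<Rightarrow> ('b \<Rightarrow> 'b set)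
     \<Rightarrow> ('b \<Rightarrow> 'b set) \<Rightarrow> ('b \<Rightarrow> 'b set) \<Rightarrow> bool" where
  "automaton_data G phi PP D DPi \<epsilon> Z L V W Vh Wh \<longleftrightarrow>
     0 < \<epsilon> \<and> \<epsilon> < D / 5 \<and> \<epsilon> < DPi / 5 \<and> finite Z \<and>
     (\<forall>z\<in>Z. open (V z) \<and> open (W z) \<and> open (Vh z) \<and> open (Wh z) \<and> L z \<subseteq> carrier G) \<and>
     (\<forall>z\<in>Z. \<not> parabolic_pt G phi PP z \<longrightarrow>
        (\<exists>a\<in>carrier G. L z = {a} \<and> Vh z = phi (inv\<^bsub>G\<^esub> a) ` V z \<and> Wh z = phi (inv\<^bsub>G\<^esub> a) ` W z)) \<and>
     (\<forall>z\<in>Z. parabolic_pt G phi PP z \<longrightarrow>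
        (\<exists>g\<in>carrier G. \<exists>p\<in>PP. z = phi g p \<and>
           (\<exists>F. finite F \<and> L z = (g <#\<^bsub>G\<^esub> stab G phi p) - F) \<and>
           Vh z \<subseteq> Wh z \<and> Wh z \<subseteq> UNIV - {p} \<and> p \<notin> Ncl \<epsilon> (Wh z))) \<and>
     (\<Union>z\<in>Z. V z) = UNIV \<and>
     (\<forall>z\<in>Z. diameter (W z) < \<epsilon>) \<and>
     (\<forall>z\<in>Z. diameter (Wh z) > 4 * \<epsilon>) \<and>
     (\<forall>z\<in>Z. Ncl (2 * \<epsilon>) (Vh z) \<subseteq> Wh z) \<and>
     (\<forall>z\<in>Z. W z = {z} \<union> (\<Union>a\<in>L z. phi a ` Wh z)) \<and>
     (\<forall>z\<in>Z. V z = {z} \<union> (\<Union>a\<in>L z. phi a ` Vh z) \<and> closure (V z) \<subseteq> W z) \<and>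
     (\<forall>y\<in>Z. \<forall>z\<in>Z. (closure (Vh z) \<inter> closure (V y) = {}) \<longleftrightarrow> (Vh z \<inter> V y = {}))"

text \<open>Edges of the automaton: an edge from z to y with label a exists iff
  z, y in Z, a in L z and Vh z meets V y (one edge per label).\<close>
definition is_edge :: "'b set \<Rightarrow> ('b \<Rightarrow> 'g set) \<Rightarrow> ('b \<Rightarrow> 'b set) \<Rightarrow> ('b \<Rightarrow> 'b set)
     \<Rightarrow> 'b \<Rightarrow> 'g \<Rightarrow> 'b \<Rightarrow> bool" where
  "is_edge Z L V Vh z a y \<longleftrightarrow> z \<in> Z \<and> y \<in> Z \<and> a \<in> L z \<and> Vh z \<inter> V y \<noteq> {}"

text \<open>A strict coding, given by its vertex sequence zs (zs 0 = initial vertex of e_1,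
  zs k = terminal vertex of e_k) and label sequence as (as k = label of e_k, k \<ge> 1),
  of length N: N = \<infinity> is a strict conical coding (infinite edge path), N = n finite
  is a strict parabolic coding (edge path e_1..e_n ending at a parabolic vertex).\<close>
definition strict_coding ::
  "('g, 'm) monoid_scheme \<Rightarrow> ('g \<Rightarrow> 'b \<Rightarrow> 'b) \<Rightarrow> 'b set \<Rightarrow> 'b set \<Rightarrow> ('b \<Rightarrow> 'g set)
     \<Rightarrow> ('b \<Rightarrow> 'b set) \<Rightarrow> ('b \<Rightarrow> 'b set) \<Rightarrow> enat \<Rightarrow> (nat \<Rightarrow> 'b) \<Rightarrow> (nat \<Rightarrow> 'g) \<Rightarrow> bool" where
  "strict_coding G phi PP Z L V Vh N zs as \<longleftrightarrow>
     zs 0 \<in> Z \<and>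
     (\<forall>k. enat (Suc k) \<le> N \<longrightarrow> is_edge Z L V Vh (zs k) (as (Suc k)) (zs (Suc k))) \<and>
     (\<forall>n. N = enat n \<longrightarrow> parabolic_pt G phi PP (zs n))"

primrec qgseq :: "('g, 'm) monoid_scheme \<Rightarrow> 'g \<Rightarrow> (nat \<Rightarrow> 'g) \<Rightarrow> nat \<Rightarrow> 'g" where
  "qgseq G g0 as 0 = g0"
| "qgseq G g0 as (Suc k) = qgseq G g0 as k \<otimes>\<^bsub>G\<^esub> as (Suc k)"

end

theory Submission
  imports Defs
begin

text \<open>Along an edge \<open>z \<rightarrow> y\<close> labelled \<open>a\<close>, the set \<open>W y\<close> has diameter \<open>< \<epsilon>\<close> and meets \<open>Vh z\<close>,
  so it lies in the \<open>2\<epsilon>\<close>-neighbourhood of \<open>Vh z\<close> and hence in \<open>Wh z\<close>; it is a proper subset,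
  since \<open>Wh z\<close> has diameter \<open>> 4\<epsilon>\<close>. By (C4) this gives \<open>a W y \<subset> W z\<close>, and translating by
  \<open>g\<^sub>k\<close> yields the strictly decreasing chain \<open>g\<^sub>k W z\<^sub>k\<close>. Two indices with the same \<open>g\<^sub>k\<close>
  must therefore carry different vertices \<open>z\<^sub>k\<close>, so each group element occurs at most \<open>#Z\<close> times.\<close>

lemma Ncl_mono: "r \<le> s \<Longrightarrow> Ncl r A \<subseteq> Ncl s A"
  unfolding Ncl_def by auto

lemma subset_Ncl_diameter:
  assumes "bounded B" and "p \<in> A" and "p \<in> B"
  shows "B \<subseteq> Ncl (diameter B) A"
proof
  fix x assume "x \<in> B"
  then have "infdist x A \<le> diameter B"
    using infdist_le[OF \<open>p \<in> A\<close>] diameter_bounded_bound[OF \<open>bounded B\<close> _ \<open>p \<in> B\<close>]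
    by (meson order_trans)
  then show "x \<in> Ncl (diameter B) A"
    using \<open>p \<in> A\<close> unfolding Ncl_def by auto
qed

lemma group_action_image_mult:
  assumes "group_action G E phi" and "a \<in> carrier G" and "b \<in> carrier G" and "S \<subseteq> E"
  shows "phi (a \<otimes>\<^bsub>G\<^esub> b) ` S = phi a ` phi b ` S"
  unfolding image_image using group_action.composition_rule[OF assms(1) _ assms(2,3)] assms(4)
  by (intro image_cong) auto

lemma automaton_dataD:
  assumes "automaton_data G phi PP D DPi \<epsilon> Z L V W Vh Wh" and "z \<in> Z"
  shows "\<epsilon> > 0" and "L z \<subseteq> carrier G" and "diameter (W z) < \<epsilon>" and "diameter (Wh z) > 4 * \<epsilon>"
    and "Ncl (2 * \<epsilon>) (Vh z) \<subseteq> Wh z" and "W z = {z} \<union> (\<Union>a\<in>L z. phi a ` Wh z)"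
    and "V z \<subseteq> W z"
proof -
  note A = assms(1)[unfolded automaton_data_def]
  show "\<epsilon> > 0"
    using A by (elim conjE)
  have "\<forall>z\<in>Z. open (V z) \<and> open (W z) \<and> open (Vh z) \<and> open (Wh z) \<and> L z \<subseteq> carrier G"
    using A by (elim conjE) assumption
  then show "L z \<subseteq> carrier G"
    using assms(2) by blast
  have "\<forall>z\<in>Z. diameter (W z) < \<epsilon>"
    using A by (elim conjE) assumption
  then show "diameter (W z) < \<epsilon>"
    using assms(2) by blast
  have "\<forall>z\<in>Z. diameter (Wh z) > 4 * \<epsilon>"
    using A by (elim conjE) assumption
  then show "diameter (Wh z) > 4 * \<epsilon>"
    using assms(2) by blast
  have "\<forall>z\<in>Z. Ncl (2 * \<epsilon>) (Vh z) \<subseteq> Wh z"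
    using A by (elim conjE) assumption
  then show "Ncl (2 * \<epsilon>) (Vh z) \<subseteq> Wh z"
    using assms(2) by blast
  have "\<forall>z\<in>Z. W z = {z} \<union> (\<Union>a\<in>L z. phi a ` Wh z)"
    using A by (elim conjE) assumption
  then show "W z = {z} \<union> (\<Union>a\<in>L z. phi a ` Wh z)"
    using assms(2) by blast
  have "\<forall>z\<in>Z. V z = {z} \<union> (\<Union>a\<in>L z. phi a ` Vh z) \<and> closure (V z) \<subseteq> W z"
    using A by (elim conjE) assumption
  then show "V z \<subseteq> W z"
    using assms(2) closure_subset by blast
qed

lemma edge_image_W_psubset:
  assumes AD: "automaton_data G phi PP D DPi \<epsilon> Z L V W Vh Wh"
    and act: "group_action G UNIV phi"
    and bdd: "bounded (W y)"
    and edge: "is_edge Z L V Vh z a y"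
  shows "phi a ` W y \<subset> W z"
proof -
  from edge have z: "z \<in> Z" and y: "y \<in> Z" and a: "a \<in> L z" and meet: "Vh z \<inter> V y \<noteq> {}"
    unfolding is_edge_def by auto
  note Dz = automaton_dataD[OF AD z] and Dy = automaton_dataD[OF AD y]
  obtain p where "p \<in> Vh z" and "p \<in> W y"
    using meet Dy(7) by blast
  have "diameter (W y) \<le> 2 * \<epsilon>"
    using Dy(1,3) by linarith
  then have "Ncl (diameter (W y)) (Vh z) \<subseteq> Ncl (2 * \<epsilon>) (Vh z)"
    by (rule Ncl_mono)
  with subset_Ncl_diameter[OF bdd \<open>p \<in> Vh z\<close> \<open>p \<in> W y\<close>]
  have "W y \<subseteq> Ncl (2 * \<epsilon>) (Vh z)"
    by (rule subset_trans)
  moreover have "W y \<noteq> Wh z"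
    using Dy(1,3) Dz(4) by auto
  ultimately have "W y \<subset> Wh z"
    using Dz(5) by blast
  moreover have "inj (phi a)"
    using a Dz(2) by (intro group_action.inj_prop[OF act]) blast
  ultimately have "phi a ` W y \<subset> phi a ` Wh z"
    using image_strict_mono by blast
  also have "\<dots> \<subseteq> W z"
    using Dz(6) a by blast
  finally show ?thesis .
qed

lemma strict_coding_edge:
  "strict_coding G phi PP Z L V Vh N zs as \<Longrightarrow> enat (Suc k) \<le> N
    \<Longrightarrow> is_edge Z L V Vh (zs k) (as (Suc k)) (zs (Suc k))"
  unfolding strict_coding_def by blast

lemma strict_coding_vertex_in:
  assumes "strict_coding G phi PP Z L V Vh N zs as" and "enat k \<le> N"
  shows "zs k \<in> Z"
proof (cases k)
  case 0
  then show ?thesis using assms(1) unfolding strict_coding_def by simp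
next
  case (Suc m)
  then show ?thesis
    using strict_coding_edge[OF assms(1), of m] assms(2) unfolding is_edge_def by simp
qed

lemma qgseq_in_carrier:
  assumes "group G" and "g0 \<in> carrier G"
    and labels: "\<And>k. enat (Suc k) \<le> N \<Longrightarrow> as (Suc k) \<in> carrier G"
  shows "enat k \<le> N \<Longrightarrow> qgseq G g0 as k \<in> carrier G"
proof (induction k)
  case 0
  then show ?case using assms(2) by simp
next
  case (Suc k)
  then have "enat k \<le> N"
    by (meson Suc_ile_eq order_less_imp_le)
  then show ?case
    using Suc labels group.is_monoid[OF assms(1)] monoid.m_closed by fastforce
qed

lemma inj_on_psubset_chain:
  assumes step: "\<And>k. enat (Suc k) \<le> N \<Longrightarrow> S (Suc k) \<subset> S k"
  shows "inj_on S {k. enat k \<le> N}"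
proof -
  have less: "S j \<subset> S i" if "enat j \<le> N" and "i < j" for i j
    using that
  proof (induction j)
    case 0
    then show ?case by simp
  next
    case (Suc j)
    then have "enat j \<le> N"
      by (meson Suc_ile_eq order_less_imp_le)
    then show ?case
      using Suc step[OF Suc.prems(1)] by (cases "i = j") auto
  qed
  show ?thesis
    by (rule inj_onI) (metis less linorder_neq_iff mem_Collect_eq psubset_eq)
qed

lemma card_fibre_le:
  assumes "inj_on (\<lambda>k. (q k, z k)) A" and "z ` A \<subseteq> Z" and "finite Z"
  shows "finite {k \<in> A. q k = g} \<and> card {k \<in> A. q k = g} \<le> card Z"
proof -
  let ?F = "{k \<in> A. q k = g}"
  have "inj_on z ?F"
    using assms(1) by (auto simp: inj_on_def)
  moreover have "z ` ?F \<subseteq> Z"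
    using assms(2) by auto
  ultimately show ?thesis
    using assms(3) card_inj_on_le finite_imageD finite_subset by metis
qed

lemma strict_coding_label_in_carrier:
  assumes "automaton_data G phi PP D DPi \<epsilon> Z L V W Vh Wh"
    and "strict_coding G phi PP Z L V Vh N zs as" and "enat (Suc k) \<le> N"
  shows "as (Suc k) \<in> carrier G"
  using strict_coding_edge[OF assms(2,3)] automaton_dataD(2)[OF assms(1)]
  unfolding is_edge_def by blast

lemma qgseq_W_psubset:
  assumes grp: "group G" and act: "group_action G UNIV phi" and bdd: "bounded (UNIV :: 'b set)"
    and AD: "automaton_data G phi PP D DPi \<epsilon> Z L V W Vh (Wh :: 'b::metric_space \<Rightarrow> 'b set)"
    and "g0 \<in> carrier G" and SC: "strict_coding G phi PP Z L V Vh N zs as"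
    and k: "enat (Suc k) \<le> N"
  shows "phi (qgseq G g0 as (Suc k)) ` W (zs (Suc k)) \<subset> phi (qgseq G g0 as k) ` W (zs k)"
proof -
  have a: "as (Suc k) \<in> carrier G"
    using AD SC k by (rule strict_coding_label_in_carrier)
  have "enat k \<le> N"
    using k by (meson Suc_ile_eq order_less_imp_le)
  with grp \<open>g0 \<in> carrier G\<close> strict_coding_label_in_carrier[OF AD SC]
  have g: "qgseq G g0 as k \<in> carrier G"
    by (rule qgseq_in_carrier)
  have "phi (qgseq G g0 as (Suc k)) ` W (zs (Suc k))
      = phi (qgseq G g0 as k) ` phi (as (Suc k)) ` W (zs (Suc k))"
    using group_action_image_mult[OF act g a] by simp
  also have "\<dots> \<subset> phi (qgseq G g0 as k) ` W (zs k)"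
    using group_action.inj_prop[OF act g]
      edge_image_W_psubset[OF AD act bounded_subset[OF bdd subset_UNIV] strict_coding_edge[OF SC k]]
    by (rule image_strict_mono[OF inj_on_subset[OF _ subset_UNIV]])
  finally show ?thesis .
qed

theorem mainTheorem9:
  fixes G :: "('g, 'm) monoid_scheme" and phi :: "'g \<Rightarrow> 'b::metric_space \<Rightarrow> 'b"
    and PP :: "'b set" and D DPi \<epsilon> :: real and K :: "'b \<Rightarrow> 'b set"
    and Z :: "'b set" and L :: "'b \<Rightarrow> 'g set" and V W Vh Wh :: "'b \<Rightarrow> 'b set"
    and g0 :: 'g and N :: enat and zs :: "nat \<Rightarrow> 'b" and as :: "nat \<Rightarrow> 'g"
  assumes "boundary_setup G phi PP D K DPi"
    and "automaton_data G phi PP D DPi \<epsilon> Z L V W Vh Wh"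
    and "g0 \<in> carrier G"
    and "strict_coding G phi PP Z L V Vh N zs as"
  shows "(\<forall>k. enat (Suc k) \<le> N \<longrightarrow>
            phi (qgseq G g0 as (Suc k)) ` W (zs (Suc k)) \<subset> phi (qgseq G g0 as k) ` W (zs k))
       \<and> (\<forall>g. finite {k. enat k \<le> N \<and> qgseq G g0 as k = g}
              \<and> card {k. enat k \<le> N \<and> qgseq G g0 as k = g} \<le> card Z)"
proof -
  have grp: "group G" and act: "group_action G UNIV phi" and cpt: "compact (UNIV :: 'b set)"
    using assms(1) unfolding boundary_setup_def by simp_all
  from cpt have "bounded (UNIV :: 'b set)"
    by (rule compact_imp_bounded)
  note chain = qgseq_W_psubset[OF grp act this assms(2,3,4)]
  have "inj_on ((\<lambda>(g, z). phi g ` W z) \<circ> (\<lambda>k. (qgseq G g0 as k, zs k))) {k. enat k \<le> N}"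
    using chain by (simp add: comp_def inj_on_psubset_chain)
  then have "inj_on (\<lambda>k. (qgseq G g0 as k, zs k)) {k. enat k \<le> N}"
    by (rule inj_on_imageI2)
  moreover have "finite Z"
    using assms(2) unfolding automaton_data_def by (elim conjE)
  ultimately have "finite {k \<in> {k. enat k \<le> N}. qgseq G g0 as k = g}
      \<and> card {k \<in> {k. enat k \<le> N}. qgseq G g0 as k = g} \<le> card Z" for g
    using strict_coding_vertex_in[OF assms(4)] by (intro card_fibre_le) auto
  with chain show ?thesis
    by simp
qed

end
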